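(* Let $V$ be a Poisson algebra over $\Bbbk$ with commutative associative product $xy$ and Poisson bracket $[x,y]$, and let $D:V\to V$ be a derivation of $V$ (a linear map that is a derivation of both the product and the bracket). On the free $H$-module $P=H\otimes V$ define $\lambda$-products on $V$ by $$(x_\lambda y)=xy,\qquad [x_\lambda y]=[x,y]+\partial\big(yD(x)\big)+\lambda D(xy),\qquad x,y\in V,$$ extended to all of $P$ by sesquilinearity. Then $P$ is a Poisson conformal algebra.
   Context: $\Bbbk$ is a field of characteristic $0$, $H=\Bbbk[\partial]$. A $\lambda$-product on an $H$-module $C$ is a $\Bbbk$-bilinear map $(x,y)\mapsto(x_\lambda y)=\sum_{n\ge0}\frac{\lambda^n}{n!}(x_{(n)}y)\in C[\lambda]$ satisfying sesquilinearity $(\partial x_\lambda y)=-\lambda(x_\lambda y)$, $(x_\lambda\partial y)=(\partial+\lambda)(x_\lambda y)$; $(x_{-\partial-\lambda}y)$ means $\sum_n\frac{(-\partial-\lambda)^n}{n!}(x_{(n)}y)$ with $\partial$ acting on coefficients. A Poisson conformal algebra is an $H$-module $P$ with two $\lambda$-products $(x_\lambda y)$ and $[x_\lambda y]$ such that: $(\cdot_\lambda\cdot)$ is associative, $(x_\lambda(y_\mu z))=((x_\lambda y)_{\lambda+\mu}z)$, and commutative, $(x_\lambda y)=(y_{-\partial-\lambda}x)$; $[\cdot_\lambda\cdot]$ is skew-symmetric, $[x_\lambda y]=-[y_{-\partial-\lambda}x]$, and satisfies the Jacobi identity $[x_\lambda[y_\mu z]]-[y_\mu[x_\lambda z]]=[[x_\lambda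 y]_{\lambda+\mu}z]$; and the conformal Leibniz rule $[x_\lambda(y_\mu z)]=([x_\lambda y]_{\lambda+\mu}z)+(y_\mu[x_\lambda z])$ holds for all $x,y,z\in P$. *)

theory Defs
  imports "HOL-Computational_Algebra.Polynomial"
begin

definition poisson_algebra ::
  "('k::field_char_0 \<Rightarrow> 'v::ab_group_add \<Rightarrow> 'v) \<Rightarrow> ('v \<Rightarrow> 'v \<Rightarrow> 'v) \<Rightarrow> ('v \<Rightarrow> 'v \<Rightarrow> 'v) \<Rightarrow> bool" where
  "poisson_algebra s pr br \<longleftrightarrow>
     vector_space s \<and>
     (\<forall>x. Vector_Spaces.linear s s (pr x)) \<and> (\<forall>y. Vector_Spaces.linear s s (\<lambda>x. pr x y)) \<and>
     (\<forall>x. Vector_Spaces.linear s s (br x)) \<and> (\<forall>y. Vector_Spaces.linear s s (\<lambda>x. br x y)) \<and>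
     (\<forall>x y z. pr (pr x y) z = pr x (pr y z)) \<and>
     (\<forall>x y. pr x y = pr y x) \<and>
     (\<forall>x y. br x y = - br y x) \<and>
     (\<forall>x y z. br x (br y z) = br (br x y) z + br y (br x z)) \<and>
     (\<forall>x y z. br x (pr y z) = pr (br x y) z + pr y (br x z))"

definition poisson_derivation ::
  "('k::field_char_0 \<Rightarrow> 'v::ab_group_add \<Rightarrow> 'v) \<Rightarrow> ('v \<Rightarrow> 'v \<Rightarrow> 'v) \<Rightarrow> ('v \<Rightarrow> 'v \<Rightarrow> 'v) \<Rightarrow> ('v \<Rightarrow> 'v) \<Rightarrow> bool" where
  "poisson_derivation s pr br D \<longleftrightarrow>
     Vector_Spaces.linear s s D \<and>
     (\<forall>x y. D (pr x y) = pr (D x) y + pr x (D y)) \<and>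
     (\<forall>x y. D (br x y) = br (D x) y + br x (D y))"

(* A lambda-product is given by its n-th products N x y n = x_(n) y, so that
   (x_\<lambda> y) = \<Sum>n. \<lambda>^n/n! (x_(n) y).
   Polynomials in \<lambda> (resp. \<lambda>,\<mu>) with coefficients in C are represented by their
   coefficient functions nat \<Rightarrow> 'c (resp. nat \<Rightarrow> nat \<Rightarrow> 'c, coefficient of \<lambda>^a \<mu>^b). *)

definition hmodule :: "('k::field_char_0 \<Rightarrow> 'c::ab_group_add \<Rightarrow> 'c) \<Rightarrow> ('c \<Rightarrow> 'c) \<Rightarrow> bool" where
  "hmodule s d \<longleftrightarrow> vector_space s \<and> Vector_Spaces.linear s s d"

(* coefficient of \<lambda>^n in (x_\<lambda> y) *)
definition lam_poly :: "('k::field_char_0 \<Rightarrow> 'c \<Rightarrow> 'c) \<Rightarrow> ('c \<Rightarrow> 'c \<Rightarrow> nat \<Rightarrow> 'c) \<Rightarrow> 'c \<Rightarrow> 'c \<Rightarrow> nat \<Rightarrow> 'c" where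
  "lam_poly s N x y n = s (inverse (fact n)) (N x y n)"

(* multiplication of a polynomial in \<lambda> by \<lambda> *)
definition lam_shift :: "(nat \<Rightarrow> 'c::zero) \<Rightarrow> nat \<Rightarrow> 'c" where
  "lam_shift p n = (if n = 0 then 0 else p (n - 1))"

definition lambda_product ::
  "('k::field_char_0 \<Rightarrow> 'c::ab_group_add \<Rightarrow> 'c) \<Rightarrow> ('c \<Rightarrow> 'c) \<Rightarrow> ('c \<Rightarrow> 'c \<Rightarrow> nat \<Rightarrow> 'c) \<Rightarrow> bool" where
  "lambda_product s d N \<longleftrightarrow>
     (\<forall>y n. Vector_Spaces.linear s s (\<lambda>x. N x y n)) \<and>
     (\<forall>x n. Vector_Spaces.linear s s (\<lambda>y. N x y n)) \<and>
     (\<forall>x y. finite {n. N x y n \<noteq> 0}) \<and>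
     (\<forall>x y n. lam_poly s N (d x) y n = - lam_shift (lam_poly s N x y) n) \<and>
     (\<forall>x y n. lam_poly s N x (d y) n = d (lam_poly s N x y n) + lam_shift (lam_poly s N x y) n)"

(* coefficient of \<lambda>^n in (x_{-\<partial>-\<lambda>} y) = \<Sum>m (-\<partial>-\<lambda>)^m/m! (x_(m) y) *)
definition lam_negsub ::
  "('k::field_char_0 \<Rightarrow> 'c::ab_group_add \<Rightarrow> 'c) \<Rightarrow> ('c \<Rightarrow> 'c) \<Rightarrow> ('c \<Rightarrow> 'c \<Rightarrow> nat \<Rightarrow> 'c) \<Rightarrow> 'c \<Rightarrow> 'c \<Rightarrow> nat \<Rightarrow> 'c" where
  "lam_negsub s d N x y n =
     (\<Sum>m\<in>{m. N x y m \<noteq> 0}. s ((-1) ^ m * of_nat (m choose n) / fact m) ((d ^^ (m - n)) (N x y m)))"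

(* coefficient of \<lambda>^a \<mu>^b in (x_\<lambda> (y_\<mu> z)), outer product N, inner product M *)
definition lam_nest ::
  "('k::field_char_0 \<Rightarrow> 'c \<Rightarrow> 'c) \<Rightarrow> ('c \<Rightarrow> 'c \<Rightarrow> nat \<Rightarrow> 'c) \<Rightarrow> ('c \<Rightarrow> 'c \<Rightarrow> nat \<Rightarrow> 'c) \<Rightarrow>
     'c \<Rightarrow> 'c \<Rightarrow> 'c \<Rightarrow> nat \<Rightarrow> nat \<Rightarrow> 'c" where
  "lam_nest s N M x y z a b = lam_poly s N x (lam_poly s M y z b) a"

(* coefficient of \<lambda>^a \<mu>^b in ((x_\<lambda> y)_{\<lambda>+\<mu>} z), inner product N, outer product M:
   ((x_\<lambda> y)_{\<lambda>+\<mu>} z) = \<Sum>k \<lambda>^k \<Sum>j (\<lambda>+\<mu>)^j/j! ((x_\<lambda> y)_k)_(j) z *)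
definition lam_comp ::
  "('k::field_char_0 \<Rightarrow> 'c::ab_group_add \<Rightarrow> 'c) \<Rightarrow> ('c \<Rightarrow> 'c \<Rightarrow> nat \<Rightarrow> 'c) \<Rightarrow> ('c \<Rightarrow> 'c \<Rightarrow> nat \<Rightarrow> 'c) \<Rightarrow>
     'c \<Rightarrow> 'c \<Rightarrow> 'c \<Rightarrow> nat \<Rightarrow> nat \<Rightarrow> 'c" where
  "lam_comp s N M x y z a b =
     (\<Sum>k\<in>{..a}. s (inverse (fact (a - k) * fact b)) (M (lam_poly s N x y k) z (a - k + b)))"

(* A = commutative associative lambda-product ( . _\<lambda> . ), B = Lie lambda-bracket [ . _\<lambda> . ] *)
definition poisson_conformal_algebra ::
  "('k::field_char_0 \<Rightarrow> 'c::ab_group_add \<Rightarrow> 'c) \<Rightarrow> ('c \<Rightarrow> 'c) \<Rightarrow> ('c \<Rightarrow> 'c \<Rightarrow> nat \<Rightarrow> 'c) \<Rightarrow> ('c \<Rightarrow> 'c \<Rightarrow> nat \<Rightarrow> 'c) \<Rightarrow> bool" where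
  "poisson_conformal_algebra s d A B \<longleftrightarrow>
     hmodule s d \<and> lambda_product s d A \<and> lambda_product s d B \<and>
     \<comment> \<open>associativity: (x_\<lambda>(y_\<mu> z)) = ((x_\<lambda> y)_{\<lambda>+\<mu>} z)\<close>
     (\<forall>x y z a b. lam_nest s A A x y z a b = lam_comp s A A x y z a b) \<and>
     \<comment> \<open>commutativity: (x_\<lambda> y) = (y_{-\<partial>-\<lambda>} x)\<close>
     (\<forall>x y n. lam_poly s A x y n = lam_negsub s d A y x n) \<and>
     \<comment> \<open>skew-symmetry: [x_\<lambda> y] = - [y_{-\<partial>-\<lambda>} x]\<close>
     (\<forall>x y n. lam_poly s B x y n = - lam_negsub s d B y x n) \<and>
     \<comment> \<open>Jacobi: [x_\<lambda>[y_\<mu> z]] - [y_\<mu>[x_\<lambda> z]] = [[x_\<lambda> y]_{\<lambda>+\<mu>} z]\<close>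
     (\<forall>x y z a b. lam_nest s B B x y z a b - lam_nest s B B y x z b a = lam_comp s B B x y z a b) \<and>
     \<comment> \<open>Leibniz: [x_\<lambda>(y_\<mu> z)] = ([x_\<lambda> y]_{\<lambda>+\<mu>} z) + (y_\<mu>[x_\<lambda> z])\<close>
     (\<forall>x y z a b. lam_nest s B A x y z a b = lam_comp s B A x y z a b + lam_nest s A B y x z b a)"

(* ---------- The free H-module P = H \<otimes> V, represented as V[\<partial>] = 'v poly ----------
   coeff p i is the V-component of \<partial>^i; \<partial> acts as pCons 0; V embeds as constants [:v:]. *)

definition pscale :: "('k \<Rightarrow> 'v::zero \<Rightarrow> 'v) \<Rightarrow> 'k \<Rightarrow> 'v poly \<Rightarrow> 'v poly" where
  "pscale s c p = map_poly (s c) p"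

definition pder :: "'v::zero poly \<Rightarrow> 'v poly" where
  "pder p = pCons 0 p"

(* A, B are lambda-products on P (hence sesquilinear) restricting on V to
   (x_\<lambda> y) = xy and [x_\<lambda> y] = [x,y] + \<partial>(y D(x)) + \<lambda> D(xy). *)
definition conformal_extension ::
  "('k::field_char_0 \<Rightarrow> 'v::ab_group_add \<Rightarrow> 'v) \<Rightarrow> ('v \<Rightarrow> 'v \<Rightarrow> 'v) \<Rightarrow> ('v \<Rightarrow> 'v \<Rightarrow> 'v) \<Rightarrow> ('v \<Rightarrow> 'v) \<Rightarrow>
     ('v poly \<Rightarrow> 'v poly \<Rightarrow> nat \<Rightarrow> 'v poly) \<Rightarrow> ('v poly \<Rightarrow> 'v poly \<Rightarrow> nat \<Rightarrow> 'v poly) \<Rightarrow> bool" where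
  "conformal_extension s pr br D A B \<longleftrightarrow>
     lambda_product (pscale s) pder A \<and> lambda_product (pscale s) pder B \<and>
     (\<forall>x y n. A [:x:] [:y:] n = (if n = 0 then [:pr x y:] else 0)) \<and>
     (\<forall>x y n. B [:x:] [:y:] n =
        (if n = 0 then [:br x y:] + pder [:pr y (D x):]
         else if n = 1 then [:D (pr x y):] else 0))"

end

theory Submission
  imports Defs
begin

text \<open>
  Written coefficientwise in \<lambda> and \<mu>, each identity required of a Poisson conformal algebra
  compares two expressions that are additive in every argument and change in the same way when
  \<partial> is applied to one argument: for a \<lambda>-product this is sesquilinearity, and for the iterated
  products ((x_\<lambda> y)_{\<lambda>+\<mu>} z) and (y_{-\<partial>-\<lambda>} x) it comes from Pascal's rule for the
  substitutions \<nu> = \<lambda> + \<mu> and \<lambda> \<mapsto> -\<partial> - \<lambda>. As P = V[\<partial>] is generated by V under sums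
  and \<partial>, two such expressions agree everywhere once they agree on V. There all products have
  degree at most one in \<lambda>, and the identities reduce to the Poisson axioms and the derivation
  property of D. Conversely, the prescribed products on V extend to P by
  (\<partial>^i u_\<lambda> \<partial>^j v) = (-\<lambda>)^i (\<partial> + \<lambda>)^j (u_\<lambda> v).
\<close>

section \<open>Sesquilinear expressions on an \<open>H\<close>-module\<close>

inductive_set d_closure :: "('c \<Rightarrow> 'c) \<Rightarrow> 'c::plus set \<Rightarrow> 'c set" for d G where
  gen: "u \<in> G \<Longrightarrow> u \<in> d_closure d G"
| add: "x \<in> d_closure d G \<Longrightarrow> y \<in> d_closure d G \<Longrightarrow> x + y \<in> d_closure d G"
| der: "x \<in> d_closure d G \<Longrightarrow> d x \<in> d_closure d G"

locale h_module = vector_space s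
  for s :: "'k::field_char_0 \<Rightarrow> 'c::ab_group_add \<Rightarrow> 'c" +
  fixes d :: "'c \<Rightarrow> 'c"
  assumes linear_d: "Vector_Spaces.linear s s d"
begin

sublocale d: Vector_Spaces.linear s s d by (fact linear_d)

lemma hmodule: "hmodule s d"
  unfolding hmodule_def by (simp add: vector_space_axioms linear_d)

lemma d_pow_add: "(d ^^ k) (x + y) = (d ^^ k) x + (d ^^ k) y"
  by (induction k) (simp_all add: d.add)

lemma d_pow_scale: "(d ^^ k) (s c x) = s c ((d ^^ k) x)"
  by (induction k) (simp_all add: d.scale)

lemma d_pow_zero [simp]: "(d ^^ k) 0 = 0"
  by (induction k) simp_all

lemma d_pow_neg: "(d ^^ k) (- x) = - (d ^^ k) x"
  by (induction k) (simp_all add: d.neg)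

definition sesquilinear2 :: "('c \<Rightarrow> 'c \<Rightarrow> nat \<Rightarrow> 'c) \<Rightarrow> bool" where
  "sesquilinear2 E \<longleftrightarrow>
     (\<forall>x x' y n. E (x + x') y n = E x y n + E x' y n) \<and>
     (\<forall>x y y' n. E x (y + y') n = E x y n + E x y' n) \<and>
     (\<forall>x y n. E (d x) y n = - lam_shift (E x y) n) \<and>
     (\<forall>x y n. E x (d y) n = d (E x y n) + lam_shift (E x y) n)"

text \<open>\<open>E x y z a b\<close> is the coefficient of \<open>\<lambda>\<^sup>a \<mu>\<^sup>b\<close> in an expression in which \<open>\<lambda>\<close> is attached
  to \<open>x\<close>, \<open>\<mu>\<close> to \<open>y\<close>, and \<open>z\<close> is the argument of the outer product.\<close>
definition sesquilinear3 :: "('c \<Rightarrow> 'c \<Rightarrow> 'c \<Rightarrow> nat \<Rightarrow> nat \<Rightarrow> 'c) \<Rightarrow> bool" where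
  "sesquilinear3 E \<longleftrightarrow>
     (\<forall>x x' y z a b. E (x + x') y z a b = E x y z a b + E x' y z a b) \<and>
     (\<forall>x y y' z a b. E x (y + y') z a b = E x y z a b + E x y' z a b) \<and>
     (\<forall>x y z z' a b. E x y (z + z') a b = E x y z a b + E x y z' a b) \<and>
     (\<forall>x y z a b. E (d x) y z a b = - lam_shift (\<lambda>a. E x y z a b) a) \<and>
     (\<forall>x y z a b. E x (d y) z a b = - lam_shift (E x y z a) b) \<and>
     (\<forall>x y z a b. E x y (d z) a b =
        d (E x y z a b) + lam_shift (\<lambda>a. E x y z a b) a + lam_shift (E x y z a) b)"

lemma sesquilinear2_uminus: "sesquilinear2 E \<Longrightarrow> sesquilinear2 (\<lambda>x y n. - E x y n)"
  by (simp add: sesquilinear2_def lam_shift_def d.neg)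

lemma sesquilinear3_add:
  "sesquilinear3 E \<Longrightarrow> sesquilinear3 F \<Longrightarrow> sesquilinear3 (\<lambda>x y z a b. E x y z a b + F x y z a b)"
  by (simp add: sesquilinear3_def lam_shift_def d.add algebra_simps)

lemma sesquilinear3_swap: "sesquilinear3 E \<Longrightarrow> sesquilinear3 (\<lambda>x y z a b. E y x z b a)"
  by (simp add: sesquilinear3_def algebra_simps)

lemma sesquilinear2_eqI:
  assumes closure: "d_closure d G = UNIV" and E: "sesquilinear2 E" and F: "sesquilinear2 F"
    and base: "\<And>u v n. u \<in> G \<Longrightarrow> v \<in> G \<Longrightarrow> E u v n = F u v n"
  shows "E x y n = F x y n"
proof -
  have "\<forall>n. E x y n = F x y n" if "x \<in> d_closure d G" "y \<in> d_closure d G" for x y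
    using that
  proof (induction x arbitrary: y rule: d_closure.induct)
    case (gen u)
    from \<open>y \<in> d_closure d G\<close> show ?case
      by (induction y rule: d_closure.induct)
        (use E F gen.hyps base in \<open>simp_all add: sesquilinear2_def lam_shift_def\<close>)
  qed (use E F in \<open>simp_all add: sesquilinear2_def lam_shift_def\<close>)
  then show ?thesis using closure by blast
qed

lemma sesquilinear3_eqI:
  assumes closure: "d_closure d G = UNIV" and E: "sesquilinear3 E" and F: "sesquilinear3 F"
    and base: "\<And>u v w a b. u \<in> G \<Longrightarrow> v \<in> G \<Longrightarrow> w \<in> G \<Longrightarrow> E u v w a b = F u v w a b"
  shows "E x y z a b = F x y z a b"
proof -
  have "\<forall>a b. E x y z a b = F x y z a b"
    if "x \<in> d_closure d G" "y \<in> d_closure d G" "z \<in> d_closure d G" for x y z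
    using that
  proof (induction x arbitrary: y z rule: d_closure.induct)
    case (gen u)
    from \<open>y \<in> d_closure d G\<close> \<open>z \<in> d_closure d G\<close> show ?case
    proof (induction y arbitrary: z rule: d_closure.induct)
      case (gen v)
      from \<open>z \<in> d_closure d G\<close> show ?case
        by (induction z rule: d_closure.induct)
          (use E F \<open>u \<in> G\<close> \<open>v \<in> G\<close> base in \<open>simp_all add: sesquilinear3_def lam_shift_def\<close>)
    qed (use E F in \<open>simp_all add: sesquilinear3_def lam_shift_def\<close>)
  qed (use E F in \<open>simp_all add: sesquilinear3_def lam_shift_def\<close>)
  then show ?thesis using closure by blast
qed

text \<open>\<open>plus_subst G a b\<close> is the coefficient of \<open>\<lambda>\<^sup>a \<mu>\<^sup>b\<close> in \<open>\<Sum>k j. \<lambda>\<^sup>k (\<lambda> + \<mu>)\<^sup>j G k j\<close>.\<close>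
definition plus_subst :: "(nat \<Rightarrow> nat \<Rightarrow> 'c) \<Rightarrow> nat \<Rightarrow> nat \<Rightarrow> 'c" where
  "plus_subst G a b = (\<Sum>k\<le>a. s (of_nat ((a - k + b) choose b)) (G k (a - k + b)))"

lemma plus_subst_add: "plus_subst (\<lambda>k j. G k j + H k j) a b = plus_subst G a b + plus_subst H a b"
  by (simp add: plus_subst_def scale_right_distrib sum.distrib)

lemma plus_subst_neg: "plus_subst (\<lambda>k j. - G k j) a b = - plus_subst G a b"
  by (simp add: plus_subst_def sum_negf)

lemma plus_subst_diff: "plus_subst (\<lambda>k j. G k j - H k j) a b = plus_subst G a b - plus_subst H a b"
  by (simp add: plus_subst_def scale_right_diff_distrib sum_subtractf)

lemma plus_subst_d: "plus_subst (\<lambda>k j. d (G k j)) a b = d (plus_subst G a b)"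
  by (simp add: plus_subst_def d.sum d.scale)

lemma plus_subst_shift_fst:
  "plus_subst (\<lambda>k j. lam_shift (\<lambda>k. G k j) k) a b = lam_shift (\<lambda>a. plus_subst G a b) a"
proof (cases a)
  case (Suc a')
  show ?thesis unfolding plus_subst_def lam_shift_def Suc sum.atMost_Suc_shift by simp
qed (simp add: plus_subst_def lam_shift_def)

text \<open>Multiplication by \<open>\<lambda> + \<mu>\<close>; the proof is Pascal's rule.\<close>
lemma plus_subst_shift_snd:
  "plus_subst (\<lambda>k. lam_shift (G k)) a b = lam_shift (\<lambda>a. plus_subst G a b) a + lam_shift (plus_subst G a) b"
proof (cases a)
  case 0
  then show ?thesis by (cases b) (simp_all add: plus_subst_def lam_shift_def)
next
  case (Suc a')
  show ?thesis
  proof (cases b)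
    case 0
    have "plus_subst (\<lambda>k. lam_shift (G k)) a b = (\<Sum>k\<le>a'. G k (a' - k))"
      unfolding plus_subst_def lam_shift_def Suc 0 sum.atMost_Suc
      by (auto intro!: sum.cong simp: Suc_diff_le)
    then show ?thesis by (simp add: plus_subst_def lam_shift_def Suc 0)
  next
    case (Suc b')
    let ?G = "\<lambda>k. G k (Suc (a' - k + b'))"
    have "plus_subst (\<lambda>k. lam_shift (G k)) a b =
        (\<Sum>k\<le>a'. s (of_nat (Suc (a' - k + b') choose b')) (?G k))
      + (\<Sum>k\<le>a'. s (of_nat (Suc (a' - k + b') choose Suc b')) (?G k)) + G a b'"
      unfolding plus_subst_def lam_shift_def \<open>a = Suc a'\<close> Suc sum.atMost_Suc
      by (auto intro!: sum.cong simp: Suc_diff_le scale_left_distrib sum.distrib[symmetric])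
    moreover have "plus_subst G a b' = (\<Sum>k\<le>a'. s (of_nat (Suc (a' - k + b') choose b')) (?G k)) + G a b'"
      unfolding plus_subst_def \<open>a = Suc a'\<close> sum.atMost_Suc
      by (auto intro!: sum.cong simp: Suc_diff_le)
    moreover have "plus_subst G a' b = (\<Sum>k\<le>a'. s (of_nat (Suc (a' - k + b') choose Suc b')) (?G k))"
      unfolding plus_subst_def Suc by (auto intro!: sum.cong simp: Suc_diff_le)
    ultimately show ?thesis using \<open>a = Suc a'\<close> Suc by (simp add: lam_shift_def ac_simps)
  qed
qed

lemma plus_subst_of_deg_le_1:
  assumes "\<And>k j. 2 \<le> k \<Longrightarrow> G k j = 0"
  shows "plus_subst G a b = s (of_nat ((a + b) choose b)) (G 0 (a + b))
     + (if a = 0 then 0 else s (of_nat ((a - 1 + b) choose b)) (G 1 (a - 1 + b)))"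
proof (cases a)
  case 0
  then show ?thesis by (simp add: plus_subst_def)
next
  case (Suc a')
  have "plus_subst G a b = s (of_nat ((Suc a' + b) choose b)) (G 0 (Suc a' + b)) +
      (\<Sum>k\<le>a'. s (of_nat ((a' - k + b) choose b)) (G (Suc k) (a' - k + b)))"
    unfolding plus_subst_def Suc sum.atMost_Suc_shift by simp
  also have "(\<Sum>k\<le>a'. s (of_nat ((a' - k + b) choose b)) (G (Suc k) (a' - k + b)))
      = s (of_nat ((a' + b) choose b)) (G 1 (a' + b))"
    by (cases a') (simp_all del: sum.atMost_Suc add: sum.atMost_Suc_shift assms)
  finally show ?thesis by (simp add: Suc)
qed

text \<open>\<open>neg_subst_term m n x\<close> is the coefficient of \<open>\<lambda>\<^sup>n\<close> in \<open>(-\<partial>-\<lambda>)\<^sup>m x\<close>.\<close>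
definition neg_subst_term :: "nat \<Rightarrow> nat \<Rightarrow> 'c \<Rightarrow> 'c" where
  "neg_subst_term m n x = s ((-1) ^ m * of_nat (m choose n)) ((d ^^ (m - n)) x)"

definition neg_subst :: "nat \<Rightarrow> (nat \<Rightarrow> 'c) \<Rightarrow> nat \<Rightarrow> 'c" where
  "neg_subst K F n = (\<Sum>m<K. neg_subst_term m n (F m))"

lemma neg_subst_term_add: "neg_subst_term m n (x + y) = neg_subst_term m n x + neg_subst_term m n y"
  by (simp add: neg_subst_term_def d_pow_add scale_right_distrib)

lemma neg_subst_term_zero [simp]: "neg_subst_term m n 0 = 0"
  by (simp add: neg_subst_term_def)

lemma neg_subst_term_neg: "neg_subst_term m n (- x) = - neg_subst_term m n x"
  by (simp add: neg_subst_term_def d_pow_neg)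

lemma neg_subst_term_d: "neg_subst_term m n (d x) = d (neg_subst_term m n x)"
  by (simp add: neg_subst_term_def d.scale funpow_swap1)

lemma neg_subst_term_Suc:
  "neg_subst_term (Suc m) n x = - d (neg_subst_term m n x) - lam_shift (\<lambda>n. neg_subst_term m n x) n"
proof (cases n)
  case 0
  then show ?thesis by (simp add: neg_subst_term_def lam_shift_def d.scale)
next
  case (Suc n')
  show ?thesis
  proof (cases "m \<le> n'")
    case True
    then have "m - n' = 0" "Suc m - n = 0" by (auto simp: Suc)
    then show ?thesis using True by (simp add: neg_subst_term_def lam_shift_def Suc binomial_eq_0)
  next
    case False
    then have "m - n' = Suc (m - n)" "Suc m - n = m - n'" by (simp_all add: Suc)
    then show ?thesis using Suc
      by (simp add: neg_subst_term_def lam_shift_def d.scale scale_left_distrib[symmetric] algebra_simps)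
  qed
qed

lemma neg_subst_two: "neg_subst 2 F n = neg_subst_term 0 n (F 0) + neg_subst_term 1 n (F 1)"
  by (simp add: neg_subst_def numeral_2_eq_2)

lemma neg_subst_add: "neg_subst K (\<lambda>m. F m + G m) n = neg_subst K F n + neg_subst K G n"
  by (simp add: neg_subst_def neg_subst_term_add sum.distrib)

text \<open>Under \<open>\<lambda> \<mapsto> -\<partial> - \<lambda>\<close>, multiplication by \<open>\<partial> + \<lambda>\<close> turns into multiplication by \<open>-\<lambda>\<close>;
  the hypothesis \<open>F K = 0\<close> keeps the truncation at \<open>K\<close> exact.\<close>
lemma neg_subst_mult_d_plus_lam:
  assumes "F K = 0"
  shows "neg_subst (Suc K) (\<lambda>m. d (F m) + lam_shift F m) n = - lam_shift (neg_subst K F) n"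
proof -
  have "(\<Sum>m<Suc K. neg_subst_term m n (d (F m))) = (\<Sum>m<K. neg_subst_term m n (d (F m)))"
    using assms by simp
  moreover have "(\<Sum>m<Suc K. neg_subst_term m n (lam_shift F m)) = (\<Sum>m<K. neg_subst_term (Suc m) n (F m))"
    unfolding sum.lessThan_Suc_shift by (simp add: lam_shift_def)
  ultimately have "neg_subst (Suc K) (\<lambda>m. d (F m) + lam_shift F m) n
      = (\<Sum>m<K. neg_subst_term m n (d (F m)) + neg_subst_term (Suc m) n (F m))"
    unfolding neg_subst_def neg_subst_term_add sum.distrib by simp
  also have "\<dots> = - lam_shift (neg_subst K F) n"
    by (simp add: neg_subst_term_d neg_subst_term_Suc neg_subst_def lam_shift_def sum_negf)
  finally show ?thesis .
qed

lemma neg_subst_mult_neg_lam: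
  "neg_subst (Suc K) (\<lambda>m. - lam_shift F m) n = d (neg_subst K F n) + lam_shift (neg_subst K F) n"
proof -
  have "neg_subst (Suc K) (\<lambda>m. - lam_shift F m) n = (\<Sum>m<K. neg_subst_term (Suc m) n (- F m))"
    unfolding neg_subst_def sum.lessThan_Suc_shift by (simp add: lam_shift_def)
  also have "\<dots> = d (neg_subst K F n) + lam_shift (neg_subst K F) n"
    by (simp add: neg_subst_term_neg neg_subst_term_Suc neg_subst_def d.sum lam_shift_def sum.distrib)
  finally show ?thesis .
qed

end

section \<open>\<open>\<lambda>\<close>-products\<close>

locale lambda_prod = h_module s d
  for s :: "'k::field_char_0 \<Rightarrow> 'c::ab_group_add \<Rightarrow> 'c" and d +
  fixes N :: "'c \<Rightarrow> 'c \<Rightarrow> nat \<Rightarrow> 'c"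
  assumes lambda_product: "lambda_product s d N"
begin

lemma N_add_left: "N (x + x') y n = N x y n + N x' y n"
  using lambda_product unfolding lambda_product_def Vector_Spaces.linear_iff by blast

lemma N_add_right: "N x (y + y') n = N x y n + N x y' n"
  using lambda_product unfolding lambda_product_def Vector_Spaces.linear_iff by blast

lemma lam_poly_add_left: "lam_poly s N (x + x') y n = lam_poly s N x y n + lam_poly s N x' y n"
  by (simp add: lam_poly_def N_add_left scale_right_distrib)

lemma lam_poly_add_right: "lam_poly s N x (y + y') n = lam_poly s N x y n + lam_poly s N x y' n"
  by (simp add: lam_poly_def N_add_right scale_right_distrib)

lemma lam_poly_zero_left [simp]: "lam_poly s N 0 y n = 0"
  and lam_poly_neg_left: "lam_poly s N (- x) y n = - lam_poly s N x y n"
proof -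
  interpret additive "\<lambda>x. lam_poly s N x y n" by standard (rule lam_poly_add_left)
  show "lam_poly s N 0 y n = 0" "lam_poly s N (- x) y n = - lam_poly s N x y n"
    by (rule zero minus)+
qed

lemma lam_poly_zero_right [simp]: "lam_poly s N x 0 n = 0"
  and lam_poly_neg_right: "lam_poly s N x (- y) n = - lam_poly s N x y n"
proof -
  interpret additive "\<lambda>y. lam_poly s N x y n" by standard (rule lam_poly_add_right)
  show "lam_poly s N x 0 n = 0" "lam_poly s N x (- y) n = - lam_poly s N x y n"
    by (rule zero minus)+
qed

lemma lam_poly_d_left: "lam_poly s N (d x) y n = - lam_shift (lam_poly s N x y) n"
  using lambda_product unfolding lambda_product_def by blast

lemma lam_poly_d_right: "lam_poly s N x (d y) n = d (lam_poly s N x y n) + lam_shift (lam_poly s N x y) n"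
  using lambda_product unfolding lambda_product_def by blast

lemma sesquilinear2_lam_poly: "sesquilinear2 (lam_poly s N)"
  by (simp add: sesquilinear2_def lam_poly_add_left lam_poly_add_right lam_poly_d_left lam_poly_d_right)

lemma eventually_N_zero: "\<forall>\<^sub>F m in sequentially. N x y m = 0"
proof -
  have "finite {m. N x y m \<noteq> 0}"
    using lambda_product unfolding lambda_product_def by blast
  then obtain K where "\<forall>m\<in>{m. N x y m \<noteq> 0}. m < K"
    unfolding finite_nat_set_iff_bounded by blast
  then show ?thesis unfolding eventually_sequentially by (meson mem_Collect_eq not_le)
qed

lemma lam_negsub_eq_neg_subst:
  assumes "\<And>m. K \<le> m \<Longrightarrow> N x y m = 0"
  shows "lam_negsub s d N x y n = neg_subst K (lam_poly s N x y) n"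
proof -
  have "{m. N x y m \<noteq> 0} \<subseteq> {..<K}"
    using assms not_le by blast
  then have "lam_negsub s d N x y n
      = (\<Sum>m<K. s ((-1) ^ m * of_nat (m choose n) / fact m) ((d ^^ (m - n)) (N x y m)))"
    unfolding lam_negsub_def by (intro sum.mono_neutral_left) auto
  also have "\<dots> = neg_subst K (lam_poly s N x y) n"
    unfolding neg_subst_def neg_subst_term_def
    by (intro sum.cong refl) (simp add: lam_poly_def d_pow_scale divide_inverse)
  finally show ?thesis .
qed

lemma eventually_lam_negsub_eq:
  "\<forall>\<^sub>F K in sequentially. lam_negsub s d N x y = neg_subst K (lam_poly s N x y)"
proof -
  obtain K0 where "\<And>m. K0 \<le> m \<Longrightarrow> N x y m = 0"
    using eventually_N_zero[of x y] by (auto simp: eventually_sequentially)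
  then have "lam_negsub s d N x y = neg_subst K (lam_poly s N x y)" if "K0 \<le> K" for K
    using that by (intro ext lam_negsub_eq_neg_subst) auto
  then show ?thesis by (auto simp: eventually_sequentially)
qed

lemma lam_negsub_add_left:
  "lam_negsub s d N (x + x') y n = lam_negsub s d N x y n + lam_negsub s d N x' y n"
proof -
  have add: "lam_poly s N (x + x') y = (\<lambda>m. lam_poly s N x y m + lam_poly s N x' y m)"
    by (simp add: fun_eq_iff lam_poly_add_left)
  have "\<forall>\<^sub>F K in sequentially.
      lam_negsub s d N (x + x') y n = lam_negsub s d N x y n + lam_negsub s d N x' y n"
    using eventually_lam_negsub_eq[of "x + x'" y] eventually_lam_negsub_eq[of x y]
      eventually_lam_negsub_eq[of x' y]
    by eventually_elim (simp add: add neg_subst_add)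
  then show ?thesis by simp
qed

lemma lam_negsub_add_right:
  "lam_negsub s d N x (y + y') n = lam_negsub s d N x y n + lam_negsub s d N x y' n"
proof -
  have add: "lam_poly s N x (y + y') = (\<lambda>m. lam_poly s N x y m + lam_poly s N x y' m)"
    by (simp add: fun_eq_iff lam_poly_add_right)
  have "\<forall>\<^sub>F K in sequentially.
      lam_negsub s d N x (y + y') n = lam_negsub s d N x y n + lam_negsub s d N x y' n"
    using eventually_lam_negsub_eq[of x "y + y'"] eventually_lam_negsub_eq[of x y]
      eventually_lam_negsub_eq[of x y']
    by eventually_elim (simp add: add neg_subst_add)
  then show ?thesis by simp
qed

lemma eventually_lam_negsub_eq_Suc:
  "\<forall>\<^sub>F K in sequentially. lam_negsub s d N x y = neg_subst (Suc K) (lam_poly s N x y)"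
  using eventually_lam_negsub_eq[of x y]
    eventually_sequentially_Suc[where P = "\<lambda>K. lam_negsub s d N x y = neg_subst K (lam_poly s N x y)"]
  by blast

lemma lam_negsub_d_left:
  "lam_negsub s d N (d x) y n = d (lam_negsub s d N x y n) + lam_shift (lam_negsub s d N x y) n"
proof -
  have der: "lam_poly s N (d x) y = (\<lambda>m. - lam_shift (lam_poly s N x y) m)"
    by (simp add: fun_eq_iff lam_poly_d_left)
  have "\<forall>\<^sub>F K in sequentially.
      lam_negsub s d N (d x) y n = d (lam_negsub s d N x y n) + lam_shift (lam_negsub s d N x y) n"
    using eventually_lam_negsub_eq_Suc[of "d x" y] eventually_lam_negsub_eq[of x y]
    by eventually_elim (simp add: der neg_subst_mult_neg_lam)
  then show ?thesis by simp
qed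

lemma lam_negsub_d_right: "lam_negsub s d N x (d y) n = - lam_shift (lam_negsub s d N x y) n"
proof -
  have der: "lam_poly s N x (d y) = (\<lambda>m. d (lam_poly s N x y m) + lam_shift (lam_poly s N x y) m)"
    by (simp add: fun_eq_iff lam_poly_d_right)
  have "\<forall>\<^sub>F K in sequentially. lam_poly s N x y K = 0"
    using eventually_N_zero[of x y] by eventually_elim (simp add: lam_poly_def)
  then have "\<forall>\<^sub>F K in sequentially. lam_negsub s d N x (d y) n = - lam_shift (lam_negsub s d N x y) n"
    using eventually_lam_negsub_eq_Suc[of x "d y"] eventually_lam_negsub_eq[of x y]
    by eventually_elim (simp add: der neg_subst_mult_d_plus_lam)
  then show ?thesis by simp
qed

lemma sesquilinear2_lam_negsub: "sesquilinear2 (\<lambda>x y n. lam_negsub s d N y x n)"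
  by (simp add: sesquilinear2_def lam_negsub_add_left lam_negsub_add_right lam_negsub_d_left
      lam_negsub_d_right)

lemma lam_comp_eq_plus_subst:
  "lam_comp s M N x y z a b = plus_subst (\<lambda>k j. lam_poly s N (lam_poly s M x y k) z j) a b"
  unfolding lam_comp_def plus_subst_def
proof (intro sum.cong refl)
  fix k
  have "inverse (fact (a - k) * fact b) = (of_nat ((a - k + b) choose b) :: 'k) * inverse (fact (a - k + b))"
    by (simp add: binomial_fact field_simps)
  then show "s (inverse (fact (a - k) * fact b)) (N (lam_poly s M x y k) z (a - k + b)) =
      s (of_nat ((a - k + b) choose b)) (lam_poly s N (lam_poly s M x y k) z (a - k + b))"
    by (simp add: lam_poly_def)
qed

lemma sesquilinear3_lam_comp:
  assumes "lambda_product s d M"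
  shows "sesquilinear3 (lam_comp s M N)"
proof -
  interpret M: lambda_prod s d M by unfold_locales (fact assms)
  define G where "G = (\<lambda>x y z k j. lam_poly s N (lam_poly s M x y k) z j)"
  have "lam_comp s M N x y z = plus_subst (G x y z)" for x y z
    by (simp add: fun_eq_iff G_def lam_comp_eq_plus_subst)
  moreover have "G (x + x') y z = (\<lambda>k j. G x y z k j + G x' y z k j)"
    and "G x (y + y') z = (\<lambda>k j. G x y z k j + G x y' z k j)"
    and "G x y (z + z') = (\<lambda>k j. G x y z k j + G x y z' k j)" for x x' y y' z z'
    by (simp_all add: fun_eq_iff G_def M.lam_poly_add_left M.lam_poly_add_right
        lam_poly_add_left lam_poly_add_right)
  moreover have "G (d x) y z = (\<lambda>k j. - lam_shift (\<lambda>k. G x y z k j) k)"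
    and "G x (d y) z = (\<lambda>k j. lam_shift (\<lambda>k. G x y z k j) k - lam_shift (G x y z k) j)"
    and "G x y (d z) = (\<lambda>k j. d (G x y z k j) + lam_shift (G x y z k) j)" for x y z
    by (simp_all add: fun_eq_iff G_def M.lam_poly_d_left M.lam_poly_d_right lam_poly_add_left
        lam_poly_d_left lam_poly_d_right lam_poly_neg_left lam_shift_def)
  ultimately show ?thesis
    by (simp add: sesquilinear3_def plus_subst_add plus_subst_neg plus_subst_diff plus_subst_d
        plus_subst_shift_fst plus_subst_shift_snd)
qed

lemma sesquilinear3_lam_nest:
  assumes "lambda_product s d M"
  shows "sesquilinear3 (lam_nest s N M)"
proof -
  interpret M: lambda_prod s d M by unfold_locales (fact assms)
  show ?thesis
    by (simp add: sesquilinear3_def lam_nest_def M.lam_poly_add_left M.lam_poly_add_right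
        M.lam_poly_d_left M.lam_poly_d_right lam_poly_add_left lam_poly_add_right
        lam_poly_d_left lam_poly_d_right lam_poly_neg_right lam_shift_def add.assoc)
qed

end

section \<open>The free \<open>H\<close>-module \<open>V[\<partial>]\<close>\<close>

lemma funpow_commute: "(\<And>x. f (g x) = g (f x)) \<Longrightarrow> (f ^^ n) (g x) = g ((f ^^ n) x)"
  by (induction n) simp_all

lemma finite_support_funpow:
  fixes h :: "(nat \<Rightarrow> 'a::zero) \<Rightarrow> nat \<Rightarrow> 'a"
  assumes "\<And>F. finite {n. F n \<noteq> 0} \<Longrightarrow> finite {n. h F n \<noteq> 0}" "finite {n. F n \<noteq> 0}"
  shows "finite {n. (h ^^ i) F n \<noteq> 0}"
  using assms by (induction i) simp_all

lemma funpow_fixpoint: "f x = x \<Longrightarrow> (f ^^ n) x = x"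
  by (induction n) simp_all

lemma funpow_pointwise_add:
  fixes h :: "(nat \<Rightarrow> 'a::plus) \<Rightarrow> nat \<Rightarrow> 'a"
  assumes "\<And>F G. h (\<lambda>n. F n + G n) = (\<lambda>n. h F n + h G n)"
  shows "(h ^^ i) (\<lambda>n. F n + G n) = (\<lambda>n. (h ^^ i) F n + (h ^^ i) G n)"
  using assms by (induction i) simp_all

lemma finite_support_sum:
  assumes "finite A" "\<And>i. i \<in> A \<Longrightarrow> finite {n. g i n \<noteq> 0}"
  shows "finite {n. (\<Sum>i\<in>A. g i n) \<noteq> 0}"
proof (rule finite_subset)
  show "{n. (\<Sum>i\<in>A. g i n) \<noteq> 0} \<subseteq> (\<Union>i\<in>A. {n. g i n \<noteq> 0})"
    by (auto elim: sum.not_neutral_contains_not_neutral)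
qed (use assms in blast)

definition mult_neg_lam :: "(nat \<Rightarrow> 'a::ab_group_add) \<Rightarrow> nat \<Rightarrow> 'a" where
  "mult_neg_lam F n = - lam_shift F n"

definition mult_der_plus_lam :: "(nat \<Rightarrow> 'a::ab_group_add poly) \<Rightarrow> nat \<Rightarrow> 'a poly" where
  "mult_der_plus_lam F n = pder (F n) + lam_shift F n"

lemma mult_neg_lam_add: "mult_neg_lam (\<lambda>n. F n + G n) = (\<lambda>n. mult_neg_lam F n + mult_neg_lam G n)"
  by (simp add: fun_eq_iff mult_neg_lam_def lam_shift_def)

lemma mult_der_plus_lam_add:
  "mult_der_plus_lam (\<lambda>n. F n + G n) = (\<lambda>n. mult_der_plus_lam F n + mult_der_plus_lam G n)"
  by (simp add: fun_eq_iff mult_der_plus_lam_def lam_shift_def pder_def)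

lemma mult_neg_lam_zero: "mult_neg_lam (\<lambda>n. 0) = (\<lambda>n. 0)"
  by (simp add: fun_eq_iff mult_neg_lam_def lam_shift_def)

lemma mult_der_plus_lam_zero: "mult_der_plus_lam (\<lambda>n. 0) = (\<lambda>n. 0)"
  by (simp add: fun_eq_iff mult_der_plus_lam_def lam_shift_def pder_def)

lemma mult_neg_lam_mult_der_plus_lam: "mult_neg_lam (mult_der_plus_lam F) = mult_der_plus_lam (mult_neg_lam F)"
  by (simp add: fun_eq_iff mult_neg_lam_def mult_der_plus_lam_def lam_shift_def pder_def)

lemma support_lam_shift: "{n. lam_shift F n \<noteq> 0} = Suc ` {n. F n \<noteq> 0}"
  by (force simp: lam_shift_def image_iff gr0_conv_Suc)

lemma finite_support_mult_neg_lam: "finite {n. F n \<noteq> 0} \<Longrightarrow> finite {n. mult_neg_lam F n \<noteq> 0}"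
  by (simp add: mult_neg_lam_def support_lam_shift)

lemma finite_support_mult_der_plus_lam:
  assumes "finite {n. F n \<noteq> 0}"
  shows "finite {n. mult_der_plus_lam F n \<noteq> 0}"
proof (rule finite_subset)
  show "{n. mult_der_plus_lam F n \<noteq> 0} \<subseteq> {n. F n \<noteq> 0} \<union> {n. lam_shift F n \<noteq> 0}"
    by (auto simp: mult_der_plus_lam_def pder_def)
qed (simp add: assms support_lam_shift)

lemma funpow_mult_neg_lam_zero [simp]: "(mult_neg_lam ^^ i) (\<lambda>n. 0) = (\<lambda>n. 0)"
  by (simp add: funpow_fixpoint mult_neg_lam_zero)

lemma funpow_mult_der_plus_lam_zero [simp]: "(mult_der_plus_lam ^^ i) (\<lambda>n. 0) = (\<lambda>n. 0)"
  by (simp add: funpow_fixpoint mult_der_plus_lam_zero)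

text \<open>\<open>f u v n\<close> is the coefficient of \<open>\<lambda>\<^sup>n\<close> in \<open>(u\<^sub>\<lambda> v)\<close> for \<open>u, v \<in> V\<close>.\<close>
definition sesqui_ext :: "('a \<Rightarrow> 'a \<Rightarrow> nat \<Rightarrow> 'a::ab_group_add poly) \<Rightarrow> 'a poly \<Rightarrow> 'a poly \<Rightarrow> nat \<Rightarrow> 'a poly"
  where "sesqui_ext f p q n = (\<Sum>i\<le>degree p. \<Sum>j\<le>degree q.
     (mult_neg_lam ^^ i) ((mult_der_plus_lam ^^ j) (f (coeff p i) (coeff q j))) n)"

lemma sesqui_ext_const: "sesqui_ext f [:x:] [:y:] n = f x y n"
  by (simp add: sesqui_ext_def)

locale free_h_module = vector_space s
  for s :: "'k::field_char_0 \<Rightarrow> 'v::ab_group_add \<Rightarrow> 'v"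
begin

lemma coeff_pscale [simp]: "coeff (pscale s c p) n = s c (coeff p n)"
  unfolding pscale_def by (rule coeff_map_poly) simp

lemma pscale_pCons [simp]: "pscale s c (pCons a p) = pCons (s c a) (pscale s c p)"
  unfolding pscale_def by (rule map_poly_pCons) simp

lemma vector_space_pscale: "vector_space (pscale s)"
  unfolding vector_space_def by (simp add: poly_eq_iff algebra_simps)

lemma linear_pder: "Vector_Spaces.linear (pscale s) (pscale s) pder"
  unfolding Vector_Spaces.linear_iff
  by (simp add: vector_space_pscale poly_eq_iff pder_def coeff_pCons')

sublocale P: h_module "pscale s" pder
  by (intro h_module.intro h_module_axioms.intro vector_space_pscale linear_pder)

lemma d_closure_constants: "d_closure pder (range (\<lambda>u::'v. [:u:])) = UNIV"
proof -
  have "p \<in> d_closure pder (range (\<lambda>u. [:u:]))" for p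
  proof (induction p)
    case 0
    have "0 \<in> range (\<lambda>u. [:u:])" by (metis pCons_0_0 rangeI)
    then show ?case by (rule d_closure.gen)
  next
    case (pCons a p)
    have "pCons a p = [:a:] + pder p" by (simp add: pder_def)
    then show ?case by (metis d_closure.add d_closure.der d_closure.gen pCons.IH rangeI)
  qed
  then show ?thesis by auto
qed

lemma degree_pscale: "degree (pscale s c p) \<le> degree p"
  by (rule degree_le) (simp add: coeff_eq_0)

lemma mult_neg_lam_pscale: "mult_neg_lam (\<lambda>n. pscale s c (F n)) = (\<lambda>n. pscale s c (mult_neg_lam F n))"
  by (simp add: fun_eq_iff mult_neg_lam_def lam_shift_def)

lemma mult_der_plus_lam_pscale:
  "mult_der_plus_lam (\<lambda>n. pscale s c (F n)) = (\<lambda>n. pscale s c (mult_der_plus_lam F n))"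
  by (simp add: fun_eq_iff mult_der_plus_lam_def lam_shift_def P.d.scale P.scale_right_distrib)

definition sesqui_ext_products :: "('v \<Rightarrow> 'v \<Rightarrow> nat \<Rightarrow> 'v poly) \<Rightarrow> 'v poly \<Rightarrow> 'v poly \<Rightarrow> nat \<Rightarrow> 'v poly"
  where "sesqui_ext_products f p q n = pscale s (fact n) (sesqui_ext f p q n)"

lemma lam_poly_sesqui_ext_products: "lam_poly (pscale s) (sesqui_ext_products f) p q n = sesqui_ext f p q n"
  by (simp add: lam_poly_def sesqui_ext_products_def)

context
  fixes f :: "'v \<Rightarrow> 'v \<Rightarrow> nat \<Rightarrow> 'v poly"
  assumes f_add_left: "\<And>x x' y. f (x + x') y = (\<lambda>n. f x y n + f x' y n)"
    and f_add_right: "\<And>x y y'. f x (y + y') = (\<lambda>n. f x y n + f x y' n)"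
begin

lemma f_zero [simp]: "f 0 y = (\<lambda>n. 0)" "f x 0 = (\<lambda>n. 0)"
  using f_add_left[of 0 0 y] f_add_right[of x 0 0] by (simp_all add: fun_eq_iff)

lemma sesqui_ext_eq_sum:
  assumes "degree p \<le> m" "degree q \<le> m'"
  shows "sesqui_ext f p q n = (\<Sum>i\<le>m. \<Sum>j\<le>m'.
     (mult_neg_lam ^^ i) ((mult_der_plus_lam ^^ j) (f (coeff p i) (coeff q j))) n)" (is "_ = ?rhs")
proof -
  have "sesqui_ext f p q n = (\<Sum>i\<le>m. \<Sum>j\<le>degree q.
      (mult_neg_lam ^^ i) ((mult_der_plus_lam ^^ j) (f (coeff p i) (coeff q j))) n)"
    unfolding sesqui_ext_def
    by (rule sum.mono_neutral_left) (use assms in \<open>auto simp: coeff_eq_0\<close>)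
  also have "\<dots> = ?rhs"
    by (intro sum.cong refl sum.mono_neutral_left) (use assms in \<open>auto simp: coeff_eq_0\<close>)
  finally show ?thesis .
qed

lemma sesqui_ext_add_left: "sesqui_ext f (p + p') q n = sesqui_ext f p q n + sesqui_ext f p' q n"
proof -
  let ?m = "max (degree p) (degree p')"
  have "degree (p + p') \<le> ?m" by (rule degree_add_le) auto
  then show ?thesis
    by (simp add: sesqui_ext_eq_sum[of _ ?m q "degree q"] f_add_left sum.distrib
        funpow_pointwise_add mult_neg_lam_add mult_der_plus_lam_add)
qed

lemma sesqui_ext_add_right: "sesqui_ext f p (q + q') n = sesqui_ext f p q n + sesqui_ext f p q' n"
proof -
  let ?m = "max (degree q) (degree q')"
  have "degree (q + q') \<le> ?m" by (rule degree_add_le) auto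
  then show ?thesis
    by (simp add: sesqui_ext_eq_sum[of p "degree p" _ ?m] f_add_right sum.distrib
        funpow_pointwise_add mult_neg_lam_add mult_der_plus_lam_add)
qed

lemma sesqui_ext_pder_left: "sesqui_ext f (pder p) q n = - lam_shift (sesqui_ext f p q) n"
proof -
  have "sesqui_ext f (pder p) q n = (\<Sum>i\<le>Suc (degree p). \<Sum>j\<le>degree q.
      (mult_neg_lam ^^ i) ((mult_der_plus_lam ^^ j) (f (coeff (pder p) i) (coeff q j))) n)"
    by (rule sesqui_ext_eq_sum) (simp_all add: pder_def degree_pCons_le)
  also have "\<dots> = (\<Sum>i\<le>degree p. \<Sum>j\<le>degree q.
      (mult_neg_lam ^^ Suc i) ((mult_der_plus_lam ^^ j) (f (coeff p i) (coeff q j))) n)"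
    unfolding sum.atMost_Suc_shift by (simp add: pder_def del: funpow.simps)
  also have "\<dots> = - lam_shift (sesqui_ext f p q) n"
    by (cases n) (simp_all add: mult_neg_lam_def lam_shift_def sesqui_ext_def sum_negf)
  finally show ?thesis .
qed

lemma sesqui_ext_pder_right:
  "sesqui_ext f p (pder q) n = pder (sesqui_ext f p q n) + lam_shift (sesqui_ext f p q) n"
proof -
  have "sesqui_ext f p (pder q) n = (\<Sum>i\<le>degree p. \<Sum>j\<le>Suc (degree q).
      (mult_neg_lam ^^ i) ((mult_der_plus_lam ^^ j) (f (coeff p i) (coeff (pder q) j))) n)"
    by (rule sesqui_ext_eq_sum) (simp_all add: pder_def degree_pCons_le)
  also have "\<dots> = (\<Sum>i\<le>degree p. \<Sum>j\<le>degree q.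
      mult_der_plus_lam ((mult_neg_lam ^^ i) ((mult_der_plus_lam ^^ j) (f (coeff p i) (coeff q j)))) n)"
    unfolding sum.atMost_Suc_shift
    by (simp add: pder_def funpow_commute[of mult_neg_lam mult_der_plus_lam, OF mult_neg_lam_mult_der_plus_lam])
  also have "\<dots> = pder (sesqui_ext f p q n) + lam_shift (sesqui_ext f p q) n"
    by (simp add: mult_der_plus_lam_def lam_shift_def sesqui_ext_def P.d.sum sum.distrib)
  finally show ?thesis .
qed

lemma sesqui_ext_scale_left:
  assumes "\<And>c x y. f (s c x) y = (\<lambda>n. pscale s c (f x y n))"
  shows "sesqui_ext f (pscale s c p) q n = pscale s c (sesqui_ext f p q n)"
  unfolding sesqui_ext_eq_sum[OF degree_pscale order.refl]
  by (simp add: sesqui_ext_def assms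
      funpow_commute[of mult_der_plus_lam "\<lambda>F n. pscale s c (F n)", OF mult_der_plus_lam_pscale]
      funpow_commute[of mult_neg_lam "\<lambda>F n. pscale s c (F n)", OF mult_neg_lam_pscale] P.scale_sum_right)

lemma sesqui_ext_scale_right:
  assumes "\<And>c x y. f x (s c y) = (\<lambda>n. pscale s c (f x y n))"
  shows "sesqui_ext f p (pscale s c q) n = pscale s c (sesqui_ext f p q n)"
  unfolding sesqui_ext_eq_sum[OF order.refl degree_pscale]
  by (simp add: sesqui_ext_def assms
      funpow_commute[of mult_der_plus_lam "\<lambda>F n. pscale s c (F n)", OF mult_der_plus_lam_pscale]
      funpow_commute[of mult_neg_lam "\<lambda>F n. pscale s c (F n)", OF mult_neg_lam_pscale] P.scale_sum_right)

lemma finite_support_sesqui_ext: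
  assumes "\<And>x y. finite {n. f x y n \<noteq> 0}"
  shows "finite {n. sesqui_ext f p q n \<noteq> 0}"
  unfolding sesqui_ext_def
  by (intro finite_support_sum finite_support_funpow finite_UN_I finite_atMost)
    (simp_all add: assms finite_support_mult_neg_lam finite_support_mult_der_plus_lam)

lemma lambda_product_sesqui_ext_products:
  assumes "\<And>c x y. f (s c x) y = (\<lambda>n. pscale s c (f x y n))"
    and "\<And>c x y. f x (s c y) = (\<lambda>n. pscale s c (f x y n))"
    and "\<And>x y. finite {n. f x y n \<noteq> 0}"
  shows "lambda_product (pscale s) pder (sesqui_ext_products f)"
  unfolding lambda_product_def Vector_Spaces.linear_iff lam_poly_sesqui_ext_products
  by (simp add: vector_space_pscale sesqui_ext_products_def sesqui_ext_add_left sesqui_ext_add_right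
      sesqui_ext_scale_left sesqui_ext_scale_right sesqui_ext_pder_left sesqui_ext_pder_right
      finite_support_sesqui_ext assms P.scale_right_distrib mult.commute)

end

end

section \<open>Poisson algebras with a derivation\<close>

locale poisson_with_derivation = free_h_module s
  for s :: "'k::field_char_0 \<Rightarrow> 'v::ab_group_add \<Rightarrow> 'v" +
  fixes pr br :: "'v \<Rightarrow> 'v \<Rightarrow> 'v" and D :: "'v \<Rightarrow> 'v"
  assumes poisson_algebra: "poisson_algebra s pr br"
    and poisson_derivation: "poisson_derivation s pr br D"
begin

lemma pr_add_left: "pr (x + x') y = pr x y + pr x' y"
  using poisson_algebra unfolding poisson_algebra_def Vector_Spaces.linear_iff by metis

lemma pr_add_right: "pr x (y + y') = pr x y + pr x y'"
  using poisson_algebra unfolding poisson_algebra_def Vector_Spaces.linear_iff by metis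

lemma br_add_left: "br (x + x') y = br x y + br x' y"
  using poisson_algebra unfolding poisson_algebra_def Vector_Spaces.linear_iff by metis

lemma br_add_right: "br x (y + y') = br x y + br x y'"
  using poisson_algebra unfolding poisson_algebra_def Vector_Spaces.linear_iff by metis

lemma pr_scale_left: "pr (s c x) y = s c (pr x y)"
  using poisson_algebra unfolding poisson_algebra_def Vector_Spaces.linear_iff by metis

lemma pr_scale_right: "pr x (s c y) = s c (pr x y)"
  using poisson_algebra unfolding poisson_algebra_def Vector_Spaces.linear_iff by metis

lemma br_scale_left: "br (s c x) y = s c (br x y)"
  using poisson_algebra unfolding poisson_algebra_def Vector_Spaces.linear_iff by metis

lemma br_scale_right: "br x (s c y) = s c (br x y)"
  using poisson_algebra unfolding poisson_algebra_def Vector_Spaces.linear_iff by metis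

lemma pr_neg_left: "pr (- x) y = - pr x y"
  and pr_neg_right: "pr x (- y) = - pr x y"
  and br_neg_left: "br (- x) y = - br x y"
  and br_neg_right: "br x (- y) = - br x y"
  by (intro additive.minus additive.intro pr_add_left pr_add_right br_add_left br_add_right)+

lemma pr_diff_right: "pr x (y - y') = pr x y - pr x y'"
  by (intro additive.diff additive.intro pr_add_right)

lemma scale_two: "s 2 x = x + x"
  using scale_left_distrib[of 1 1 x] by simp

lemma pr_assoc: "pr (pr x y) z = pr x (pr y z)"
  using poisson_algebra unfolding poisson_algebra_def by metis

lemma pr_commute: "pr x y = pr y x"
  using poisson_algebra unfolding poisson_algebra_def by metis

lemma br_skew: "br x y = - br y x"
  using poisson_algebra unfolding poisson_algebra_def by metis

lemma br_jacobi: "br x (br y z) = br (br x y) z + br y (br x z)"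
  using poisson_algebra unfolding poisson_algebra_def by metis

lemma br_leibniz: "br x (pr y z) = pr (br x y) z + pr y (br x z)"
  using poisson_algebra unfolding poisson_algebra_def by metis

lemma pr_left_commute: "pr x (pr y z) = pr y (pr x z)"
  by (metis pr_assoc pr_commute)

lemma br_leibniz_left: "br (pr x y) z = pr x (br y z) + pr (br x z) y"
  by (metis br_skew br_leibniz pr_commute add.commute minus_add_distrib pr_neg_left pr_neg_right)

sublocale D: Vector_Spaces.linear s s D
  using poisson_derivation unfolding poisson_derivation_def by metis

lemma D_pr: "D (pr x y) = pr (D x) y + pr x (D y)"
  using poisson_derivation unfolding poisson_derivation_def by metis

lemma D_br: "D (br x y) = br (D x) y + br x (D y)"
  using poisson_derivation unfolding poisson_derivation_def by metis

definition product_coeffs :: "'v \<Rightarrow> 'v \<Rightarrow> nat \<Rightarrow> 'v poly" where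
  "product_coeffs x y n = (if n = 0 then [:pr x y:] else 0)"

definition bracket_coeffs :: "'v \<Rightarrow> 'v \<Rightarrow> nat \<Rightarrow> 'v poly" where
  "bracket_coeffs x y n =
     (if n = 0 then [:br x y:] + pder [:pr y (D x):] else if n = 1 then [:D (pr x y):] else 0)"

lemma conformal_extension_sesqui_ext:
  "conformal_extension s pr br D (sesqui_ext_products product_coeffs) (sesqui_ext_products bracket_coeffs)"
proof -
  have "finite {n. bracket_coeffs x y n \<noteq> 0}" for x y
    by (rule finite_subset[of _ "{0, 1}"]) (auto simp: bracket_coeffs_def)
  then have "lambda_product (pscale s) pder (sesqui_ext_products bracket_coeffs)"
    by (intro lambda_product_sesqui_ext_products)
      (simp_all add: fun_eq_iff bracket_coeffs_def pder_def pr_add_left pr_add_right pr_scale_left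
        pr_scale_right br_add_left br_add_right br_scale_left br_scale_right D.add D.scale
        scale_right_distrib)
  moreover have "lambda_product (pscale s) pder (sesqui_ext_products product_coeffs)"
    by (intro lambda_product_sesqui_ext_products)
      (simp_all add: fun_eq_iff product_coeffs_def pr_add_left pr_add_right pr_scale_left pr_scale_right)
  ultimately show ?thesis
    by (simp add: conformal_extension_def sesqui_ext_products_def sesqui_ext_const product_coeffs_def
        bracket_coeffs_def)
qed

context
  fixes A B :: "'v poly \<Rightarrow> 'v poly \<Rightarrow> nat \<Rightarrow> 'v poly"
  assumes extension: "conformal_extension s pr br D A B"
begin

interpretation A: lambda_prod "pscale s" pder A
  using extension unfolding conformal_extension_def by unfold_locales blast

interpretation B: lambda_prod "pscale s" pder B
  using extension unfolding conformal_extension_def by unfold_locales blast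

lemma lam_poly_A_const: "lam_poly (pscale s) A [:x:] [:y:] n = product_coeffs x y n"
  using extension by (simp add: conformal_extension_def lam_poly_def product_coeffs_def)

lemma lam_poly_B_const: "lam_poly (pscale s) B [:x:] [:y:] n = bracket_coeffs x y n"
  using extension by (simp add: conformal_extension_def lam_poly_def bracket_coeffs_def)

lemma assoc_const:
  "lam_nest (pscale s) A A [:u:] [:v:] [:w:] a b = lam_comp (pscale s) A A [:u:] [:v:] [:w:] a b"
  by (simp add: lam_nest_def A.lam_comp_eq_plus_subst P.plus_subst_of_deg_le_1 lam_poly_A_const
      product_coeffs_def pr_assoc)

lemma products_const_vanish:
  assumes "2 \<le> m"
  shows "A [:x:] [:y:] m = 0" and "B [:x:] [:y:] m = 0"
  using extension assms by (simp_all add: conformal_extension_def)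

lemma commute_const: "lam_poly (pscale s) A [:u:] [:v:] n = lam_negsub (pscale s) pder A [:v:] [:u:] n"
  by (simp add: A.lam_negsub_eq_neg_subst[of 2] products_const_vanish P.neg_subst_two
      P.neg_subst_term_def lam_poly_A_const product_coeffs_def pr_commute binomial_eq_0)

lemma skew_const: "lam_poly (pscale s) B [:u:] [:v:] n = - lam_negsub (pscale s) pder B [:v:] [:u:] n"
  by (simp add: B.lam_negsub_eq_neg_subst[of 2] products_const_vanish P.neg_subst_two
      P.neg_subst_term_def lam_poly_B_const bracket_coeffs_def pder_def binomial_eq_0 pr_commute
      br_skew[of v u] D_pr D.add D.neg pr_neg_left pr_neg_right br_neg_left algebra_simps)

text \<open>On constants all products have degree at most one in \<open>\<lambda>\<close>, so these rules reduce every
  coefficient to an explicit expression in \<open>V\<close>.\<close>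
lemmas expand_const =
  lam_nest_def A.lam_comp_eq_plus_subst B.lam_comp_eq_plus_subst P.plus_subst_of_deg_le_1
  lam_poly_A_const lam_poly_B_const product_coeffs_def bracket_coeffs_def
  A.lam_poly_add_left A.lam_poly_add_right A.lam_poly_d_left A.lam_poly_d_right
  B.lam_poly_add_left B.lam_poly_add_right B.lam_poly_d_left B.lam_poly_d_right
  A.lam_poly_neg_left A.lam_poly_neg_right B.lam_poly_neg_left B.lam_poly_neg_right lam_shift_def

lemma leibniz_const:
  "lam_nest (pscale s) B A [:u:] [:v:] [:w:] a b =
     lam_comp (pscale s) B A [:u:] [:v:] [:w:] a b + lam_nest (pscale s) A B [:v:] [:u:] [:w:] b a"
  by (simp add: expand_const)
    (simp add: pder_def pr_add_left pr_add_right br_add_left br_add_right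
      D.add D_pr D_br br_leibniz br_leibniz_left pr_assoc pr_commute
      pr_left_commute algebra_simps)

lemma jacobi_const:
  "lam_nest (pscale s) B B [:u:] [:v:] [:w:] a b =
     lam_comp (pscale s) B B [:u:] [:v:] [:w:] a b + lam_nest (pscale s) B B [:v:] [:u:] [:w:] b a"
  by (simp add: expand_const)
    (simp add: pder_def pr_add_left pr_add_right br_add_left br_add_right pr_neg_left pr_neg_right
      br_neg_left br_neg_right D.add D.neg D_pr D_br br_leibniz br_leibniz_left pr_assoc pr_commute
      pr_left_commute pr_diff_right scale_two algebra_simps br_skew[of "D u" v] br_skew[of v u]
      br_jacobi[of u v w]; linarith) \<comment> \<open>the leftover cases have incompatible indices\<close>

lemma poisson_conformal_algebra: "poisson_conformal_algebra (pscale s) pder A B"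
  unfolding poisson_conformal_algebra_def
proof (intro conjI allI)
  show "hmodule (pscale s) pder" by (rule P.hmodule)
  show "lambda_product (pscale s) pder A" by (rule A.lambda_product)
  show "lambda_product (pscale s) pder B" by (rule B.lambda_product)
next
  fix x y z a b
  show "lam_nest (pscale s) A A x y z a b = lam_comp (pscale s) A A x y z a b"
    by (rule P.sesquilinear3_eqI[OF d_closure_constants A.sesquilinear3_lam_nest[OF A.lambda_product]
          A.sesquilinear3_lam_comp[OF A.lambda_product]])
      (auto simp: assoc_const)
next
  fix x y n
  show "lam_poly (pscale s) A x y n = lam_negsub (pscale s) pder A y x n"
    by (rule P.sesquilinear2_eqI[OF d_closure_constants A.sesquilinear2_lam_poly
          A.sesquilinear2_lam_negsub])
      (auto simp: commute_const)
next
  fix x y n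
  show "lam_poly (pscale s) B x y n = - lam_negsub (pscale s) pder B y x n"
    by (rule P.sesquilinear2_eqI[OF d_closure_constants B.sesquilinear2_lam_poly
          P.sesquilinear2_uminus[OF B.sesquilinear2_lam_negsub]])
      (auto simp: skew_const)
next
  fix x y z a b
  have "lam_nest (pscale s) B B x y z a b =
      lam_comp (pscale s) B B x y z a b + lam_nest (pscale s) B B y x z b a"
    by (rule P.sesquilinear3_eqI[OF d_closure_constants B.sesquilinear3_lam_nest[OF B.lambda_product]
          P.sesquilinear3_add[OF B.sesquilinear3_lam_comp[OF B.lambda_product]
            P.sesquilinear3_swap[OF B.sesquilinear3_lam_nest[OF B.lambda_product]]]])
      (auto intro: jacobi_const)
  then show "lam_nest (pscale s) B B x y z a b - lam_nest (pscale s) B B y x z b a =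
      lam_comp (pscale s) B B x y z a b"
    by simp
next
  fix x y z a b
  show "lam_nest (pscale s) B A x y z a b =
      lam_comp (pscale s) B A x y z a b + lam_nest (pscale s) A B y x z b a"
    by (rule P.sesquilinear3_eqI[OF d_closure_constants B.sesquilinear3_lam_nest[OF A.lambda_product]
          P.sesquilinear3_add[OF A.sesquilinear3_lam_comp[OF B.lambda_product]
            P.sesquilinear3_swap[OF A.sesquilinear3_lam_nest[OF B.lambda_product]]]])
      (auto intro: leibniz_const)
qed

end

end

theorem mainTheorem3:
  fixes s :: "'k::field_char_0 \<Rightarrow> 'v::ab_group_add \<Rightarrow> 'v"
    and pr br :: "'v \<Rightarrow> 'v \<Rightarrow> 'v" and D :: "'v \<Rightarrow> 'v"
  assumes "poisson_algebra s pr br"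
    and "poisson_derivation s pr br D"
  shows "(\<exists>A B. conformal_extension s pr br D A B) \<and>
         (\<forall>A B. conformal_extension s pr br D A B \<longrightarrow>
                 poisson_conformal_algebra (pscale s) pder A B)"
proof -
  have "free_h_module s"
    using assms(1) unfolding free_h_module_def poisson_algebra_def by blast
  then interpret poisson_with_derivation s pr br D
    using assms by (intro poisson_with_derivation.intro poisson_with_derivation_axioms.intro)
  show ?thesis
    using conformal_extension_sesqui_ext poisson_conformal_algebra by blast
qed

end
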